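(* In the entry–exit model described in the context (under all its standing assumptions (A1)–(A8)), define the operator $(\Gamma u)(\phi,p):=\int u(\phi',p)\,\Gamma(\phi,\mathrm d\phi')$. Then $\Gamma$ maps $\mathscr C$ into $\mathscr C$, and $\Gamma\kappa\le\kappa/\delta$ pointwise on $\mathbb R_+^2$.
   Context: Let $\mathbb R_+=[0,\infty)$ and let $\mathscr B$ denote its Borel sets; integrals are over $\mathbb R_+$. "Increasing" for functions on $\mathbb R_+^2$ refers to the componentwise order. Standing assumptions: (A1) A demand function $D$ on $\mathbb R_+$ is continuous and strictly decreasing with $D(0)=\infty$ and $\lim_{p\to\infty}D(p)=0$. (A2) Profit $\pi(\phi,p)$ and output $q(\phi,p)$ are functions of productivity $\phi\ge 0$ and price $p\ge0$; both are continuous and strictly increasing on $\mathbb R_+^2$; $q\ge 0$; and $\pi(\phi,p)<0$ if $\phi=0$ or $p=0$. (A3) $\Gamma$ is a Markov transition kernel on $\mathbb R_+$ which is monotone increasing (i.e. $\phi\mapsto\Gamma(\phi,[0,a])$ is decreasing for every $a\ge0$); $\Gamma^n$ denotes its $n$-step kernel. Moreover (a) for each $a>0$ and $\phi\ge0$ there is $n\in\mathbb N$ with $\Gamma^n(\phi,[0,a))>0$; (b) for each $p>0$ there exists $\phi\ge0$ with $\int \pi(\phi',p)\Gamma(\phi,\mathrm d\phi')\ge 0$. $\beta=1/(1+r)$ for a fixed $r>0$. (A4) $\gamma$ is a Borel probability measure on $\mathbb R_+$ with $\int q(\phi,p)\gamma(\mathrm d\phi)<\infty$ for all $p$ and $\gamma([0,a])>0$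 for all $a>0$; $c_e>0$ is a fixed entry cost. (A5) There exists $p>0$ with $\int \pi(\phi,p)\gamma(\mathrm d\phi)\ge c_e$. (A6) For every $p$, $\sum_{t\ge0}\beta^t\int \pi(\phi',p)\Gamma^t(0,\mathrm d\phi')\le 0$. (A7) Let $\{\phi_t\}$ be the process with $\phi_0\sim\gamma$ and $\phi_{t+1}\sim\Gamma(\phi_t,\cdot)$. There is $\delta\in(\beta,1)$ with $\sum_{t\ge0}\delta^t\,\mathbb E\,\pi(\phi_t,p)<\infty$ for all $p\ge0$. Fix a constant $b$ with $\pi+b\ge1$ and set $\kappa(\phi,p):=\sum_{t\ge0}\delta^t\mathbb E_\phi[\pi(\phi_t,p)+b]$, where under $\mathbb E_\phi$ the process starts at $\phi_0=\phi$ and evolves via $\Gamma$; $\kappa$ is assumed finite everywhere. For $f$ on $\mathbb R_+^2$ let $\|f\|_\kappa:=\sup|f/\kappa|$. Let $\mathscr C$ be the set of continuous, increasing functions $f$ on $\mathbb R_+^2$ with $\|f\|_\kappa<\infty$. (A8) For every $u\in\mathscr C$, the map $(\phi,p)\mapsto\int u(\phi',p)\Gamma(\phi,\mathrm d\phi')$ is continuous. *)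

theory Defs
  imports "HOL-Probability.Probability"
begin

definition Rplus :: "real measure" where
  "Rplus = restrict_space borel {0..}"

fun kpow :: "(real \<Rightarrow> real measure) \<Rightarrow> nat \<Rightarrow> real \<Rightarrow> real measure" where
  "kpow \<Gamma> 0 x = return Rplus x"
| "kpow \<Gamma> (Suc n) x = bind (kpow \<Gamma> n x) \<Gamma>"

definition Gamma_op :: "(real \<Rightarrow> real measure) \<Rightarrow> (real \<Rightarrow> real \<Rightarrow> real) \<Rightarrow> real \<Rightarrow> real \<Rightarrow> real" where
  "Gamma_op \<Gamma> u \<phi> p = (\<integral>\<phi>'. u \<phi>' p \<partial>(\<Gamma> \<phi>))"

definition kappa_enn :: "(real \<Rightarrow> real measure) \<Rightarrow> (real \<Rightarrow> real \<Rightarrow> real) \<Rightarrow> real \<Rightarrow> real \<Rightarrow> real \<Rightarrow> real \<Rightarrow> ennreal" where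
  "kappa_enn \<Gamma> \<pi> b \<delta> \<phi> p =
     (\<Sum>t. ennreal (\<delta> ^ t) * (\<integral>\<^sup>+ \<phi>'. ennreal (\<pi> \<phi>' p + b) \<partial>(kpow \<Gamma> t \<phi>)))"

definition kappa :: "(real \<Rightarrow> real measure) \<Rightarrow> (real \<Rightarrow> real \<Rightarrow> real) \<Rightarrow> real \<Rightarrow> real \<Rightarrow> real \<Rightarrow> real \<Rightarrow> real" where
  "kappa \<Gamma> \<pi> b \<delta> \<phi> p = enn2real (kappa_enn \<Gamma> \<pi> b \<delta> \<phi> p)"

definition incr2 :: "(real \<Rightarrow> real \<Rightarrow> real) \<Rightarrow> bool" where
  "incr2 f \<longleftrightarrow> (\<forall>\<phi>1 \<phi>2 p1 p2. 0 \<le> \<phi>1 \<longrightarrow> 0 \<le> p1 \<longrightarrow> \<phi>1 \<le> \<phi>2 \<longrightarrow> p1 \<le> p2 \<longrightarrow> f \<phi>1 p1 \<le> f \<phi>2 p2)"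

definition strict_incr2 :: "(real \<Rightarrow> real \<Rightarrow> real) \<Rightarrow> bool" where
  "strict_incr2 f \<longleftrightarrow> (\<forall>\<phi>1 \<phi>2 p1 p2. 0 \<le> \<phi>1 \<longrightarrow> 0 \<le> p1 \<longrightarrow> \<phi>1 \<le> \<phi>2 \<longrightarrow> p1 \<le> p2
       \<longrightarrow> (\<phi>1, p1) \<noteq> (\<phi>2, p2) \<longrightarrow> f \<phi>1 p1 < f \<phi>2 p2)"

definition Cspace :: "(real \<Rightarrow> real \<Rightarrow> real) \<Rightarrow> (real \<Rightarrow> real \<Rightarrow> real) set" where
  "Cspace \<kappa> = {f. continuous_on ({0..} \<times> {0..}) (\<lambda>(\<phi>, p). f \<phi> p) \<and> incr2 f \<and>
       bdd_above ((\<lambda>(\<phi>, p). \<bar>f \<phi> p / \<kappa> \<phi> p\<bar>) ` ({0..} \<times> {0..}))}"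

end

theory Submission
  imports Defs
begin

(* kappa is the delta-discounted potential sum_t delta^t Gamma^t (pi + b) of the kernel, so it
   satisfies the resolvent identity kappa = (pi + b) + delta * Gamma kappa.  As pi + b >= 0, this
   gives Gamma kappa <= kappa / delta.  For u in C we have |u| <= M kappa, hence u is Gamma-integrable
   and |Gamma u| <= (M / delta) kappa; continuity of Gamma u is (A8).  Monotonicity in p is
   monotonicity of the integral; monotonicity in phi is first-order stochastic dominance: for
   continuous increasing h >= 0 every superlevel set of h in R_+ is empty, R_+ or a ray (a, oo),
   whose Gamma(phi)-measure increases with phi by (A3), and the layer-cake formula
   int h = int_0^oo mu {h > t} dt turns this into int h dGamma(phi1) <= int h dGamma(phi2). *)

lemma space_Rplus [simp]: "space Rplus = {0..}"
  by (simp add: Rplus_def space_restrict_space)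

lemma borel_measurable_Rplus_continuous_on:
  "continuous_on {0..} h \<Longrightarrow> h \<in> borel_measurable Rplus"
  unfolding Rplus_def by (rule borel_measurable_continuous_on_restrict)

lemma continuous_on_slice:
  assumes "continuous_on ({0..} \<times> {0..}) (\<lambda>(x, p). f x p)" and "0 \<le> p"
  shows "continuous_on {0..} (\<lambda>x. f x p)"
proof -
  have "continuous_on {0..} ((\<lambda>(x, p). f x p) \<circ> (\<lambda>x. (x, p)))"
    by (rule continuous_on_compose)
      (auto intro!: continuous_intros continuous_on_subset[OF assms(1)] simp: assms(2))
  then show ?thesis by (simp add: o_def)
qed

lemma sets_eq_RplusD:
  assumes "sets M = sets Rplus"
  shows "space M = {0..}" and "{0..a} \<in> sets M"
  using sets_eq_imp_space_eq[OF assms]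
  by (auto simp: assms Rplus_def sets_restrict_space_iff)

lemma Cspace_abs_le:
  assumes "u \<in> Cspace \<kappa>" and \<kappa>_pos: "\<And>\<phi> p. 0 \<le> \<phi> \<Longrightarrow> 0 \<le> p \<Longrightarrow> 0 < \<kappa> \<phi> p"
  obtains M where "0 \<le> M" and "\<And>\<phi> p. 0 \<le> \<phi> \<Longrightarrow> 0 \<le> p \<Longrightarrow> \<bar>u \<phi> p\<bar> \<le> M * \<kappa> \<phi> p"
proof -
  obtain M where M_ub: "\<forall>z \<in> (\<lambda>(\<phi>, p). \<bar>u \<phi> p / \<kappa> \<phi> p\<bar>) ` ({0..} \<times> {0..}). z \<le> M"
    using assms(1) unfolding Cspace_def bdd_above_def by blast
  have M: "\<bar>u \<phi> p\<bar> / \<kappa> \<phi> p \<le> M" if "0 \<le> \<phi>" "0 \<le> p" for \<phi> p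
  proof -
    have "(\<phi>, p) \<in> {0..} \<times> {0..}" using that by simp
    from bspec[OF M_ub imageI[OF this]] show ?thesis
      using \<kappa>_pos[OF that] by (simp add: abs_divide)
  qed
  have "\<bar>u \<phi> p\<bar> \<le> M * \<kappa> \<phi> p" if "0 \<le> \<phi>" "0 \<le> p" for \<phi> p
    using M[OF that] \<kappa>_pos[OF that] by (simp add: pos_divide_le_eq)
  moreover have "0 \<le> M"
    using order.trans[OF divide_nonneg_pos[OF abs_ge_zero \<kappa>_pos] M] by fastforce
  ultimately show thesis using that by blast
qed

section \<open>Stochastic dominance on the half-line\<close>

lemma superlevel_set_continuous_mono:
  fixes h :: "real \<Rightarrow> real"
  assumes cont: "continuous_on {0..} h" and mono: "\<And>x y. 0 \<le> x \<Longrightarrow> x \<le> y \<Longrightarrow> h x \<le> h y"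
  obtains "{x\<in>{0..}. t < h x} = {}" | "{x\<in>{0..}. t < h x} = {0..}"
    | a where "0 \<le> a" "{x\<in>{0..}. t < h x} = {a<..}"
proof -
  let ?S = "{x\<in>{0..}. t < h x}"
  consider "?S = {}" | "0 \<in> ?S" | "?S \<noteq> {}" "0 \<notin> ?S" by blast
  then show thesis
  proof cases
    case 2
    then have "?S = {0..}" using mono by (auto intro: less_le_trans)
    with that show thesis by blast
  next
    case 3
    define a where "a = Inf ?S"
    have bdd: "bdd_below ?S" by (rule bdd_belowI[of _ 0]) auto
    have lower: "a \<le> x" if "x \<in> ?S" for x
      unfolding a_def using that bdd by (rule cInf_lower)
    have "0 \<le> a" unfolding a_def using 3 by (intro cInf_greatest) auto
    have "a \<notin> ?S"
    proof
      assume aS: "a \<in> ?S"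
      with 3 \<open>0 \<le> a\<close> have "0 < a" by (cases "a = 0") auto
      from aS have "0 < h a - t" by simp
      with cont aS obtain d where "d > 0" and d: "\<forall>x\<in>{0..}. dist x a < d \<longrightarrow> dist (h x) (h a) < h a - t"
        unfolding continuous_on_iff by blast
      define y where "y = a - min a d / 2"
      have y: "0 \<le> y" "y < a" "dist y a < d" using \<open>0 < a\<close> \<open>d > 0\<close> by (auto simp: y_def dist_real_def)
      then have "dist (h y) (h a) < h a - t" using d by auto
      then have "y \<in> ?S" using y by (auto simp: dist_real_def)
      with lower y show False by fastforce
    qed
    have "x \<in> ?S" if "a < x" for x
    proof -
      obtain s where "s \<in> ?S" "s < x" using 3 bdd \<open>a < x\<close> by (auto simp: a_def cInf_less_iff)
      then show ?thesis using mono[of s x] by auto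
    qed
    with lower \<open>a \<notin> ?S\<close> have "?S = {a<..}" by (auto simp: order.order_iff_strict)
    with that \<open>0 \<le> a\<close> show thesis by blast
  qed (use that in blast)
qed

lemma emeasure_superlevel_set_mono:
  fixes h :: "real \<Rightarrow> real"
  assumes cont: "continuous_on {0..} h" and mono: "\<And>x y. 0 \<le> x \<Longrightarrow> x \<le> y \<Longrightarrow> h x \<le> h y"
    and M1: "prob_space M1" "sets M1 = sets Rplus" and M2: "prob_space M2" "sets M2 = sets Rplus"
    and dom: "\<And>a. 0 \<le> a \<Longrightarrow> measure M2 {0..a} \<le> measure M1 {0..a}"
  shows "emeasure M1 {x\<in>{0..}. t < h x} \<le> emeasure M2 {x\<in>{0..}. t < h x}"
proof -
  interpret M1: prob_space M1 by (rule M1)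
  interpret M2: prob_space M2 by (rule M2)
  note sets1 = sets_eq_RplusD[OF M1(2)] and sets2 = sets_eq_RplusD[OF M2(2)]
  consider (empty) "{x\<in>{0..}. t < h x} = {}" | (all) "{x\<in>{0..}. t < h x} = {0..}"
    | (ray) a where "0 \<le> a" "{x\<in>{0..}. t < h x} = {a<..}"
    using superlevel_set_continuous_mono[OF cont mono, of t] by blast
  then show ?thesis
  proof cases
    case empty
    show ?thesis unfolding empty by simp
  next
    case all
    show ?thesis unfolding all using M1.emeasure_space_1 M2.emeasure_space_1 sets1 sets2 by simp
  next
    case (ray a)
    have "{a<..} = {0..} - {0..a}" using \<open>0 \<le> a\<close> by auto
    then have "measure M1 {a<..} = 1 - measure M1 {0..a}" "measure M2 {a<..} = 1 - measure M2 {0..a}"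
      using M1.prob_compl M2.prob_compl sets1 sets2 by simp_all
    with dom[OF \<open>0 \<le> a\<close>] have "measure M1 {a<..} \<le> measure M2 {a<..}" by simp
    then show ?thesis unfolding ray by (simp add: M1.emeasure_eq_measure M2.emeasure_eq_measure)
  qed
qed

lemma nn_integral_layer_cake:
  fixes h :: "'a \<Rightarrow> real"
  assumes "sigma_finite_measure M" and h_meas [measurable]: "h \<in> borel_measurable M"
    and h_nonneg: "\<And>x. x \<in> space M \<Longrightarrow> 0 \<le> h x"
  shows "(\<integral>\<^sup>+x. h x \<partial>M) = (\<integral>\<^sup>+t. indicator {0..} t * emeasure M {x\<in>space M. t < h x} \<partial>lborel)"
proof -
  interpret sigma_finite_measure M by (rule assms(1))
  interpret pair_sigma_finite M lborel by unfold_locales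
  define F :: "'a \<Rightarrow> real \<Rightarrow> ennreal" where "F x t = indicator {0..<h x} t" for x t
  have F_meas: "case_prod F \<in> borel_measurable (M \<Otimes>\<^sub>M lborel)"
    unfolding F_def indicator_def atLeastLessThan_iff by measurable
  have "(\<integral>\<^sup>+x. h x \<partial>M) = (\<integral>\<^sup>+x. (\<integral>\<^sup>+t. F x t \<partial>lborel) \<partial>M)"
    by (rule nn_integral_cong) (simp add: F_def h_nonneg)
  also have "\<dots> = (\<integral>\<^sup>+t. (\<integral>\<^sup>+x. F x t \<partial>M) \<partial>lborel)"
    by (rule Fubini'[OF F_meas, symmetric])
  also have "\<dots> = (\<integral>\<^sup>+t. indicator {0..} t * emeasure M {x\<in>space M. t < h x} \<partial>lborel)"
  proof (rule nn_integral_cong)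
    fix t :: real
    have "(\<integral>\<^sup>+x. F x t \<partial>M) = (\<integral>\<^sup>+x. indicator {0..} t * indicator {x\<in>space M. t < h x} x \<partial>M)"
      by (rule nn_integral_cong) (auto simp: F_def indicator_def)
    then show "(\<integral>\<^sup>+x. F x t \<partial>M) = indicator {0..} t * emeasure M {x\<in>space M. t < h x}"
      by (simp add: nn_integral_cmult)
  qed
  finally show ?thesis .
qed

lemma nn_integral_mono_stochastic_dominance:
  fixes h :: "real \<Rightarrow> real"
  assumes cont: "continuous_on {0..} h" and mono: "\<And>x y. 0 \<le> x \<Longrightarrow> x \<le> y \<Longrightarrow> h x \<le> h y"
    and h_nonneg: "\<And>x. 0 \<le> x \<Longrightarrow> 0 \<le> h x"
    and M1: "prob_space M1" "sets M1 = sets Rplus" and M2: "prob_space M2" "sets M2 = sets Rplus"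
    and dom: "\<And>a. 0 \<le> a \<Longrightarrow> measure M2 {0..a} \<le> measure M1 {0..a}"
  shows "(\<integral>\<^sup>+x. h x \<partial>M1) \<le> (\<integral>\<^sup>+x. h x \<partial>M2)"
proof -
  have layer_cake: "(\<integral>\<^sup>+x. h x \<partial>M) = (\<integral>\<^sup>+t. indicator {0..} t * emeasure M {x\<in>{0..}. t < h x} \<partial>lborel)"
    if "prob_space M" "sets M = sets Rplus" for M
  proof -
    have "h \<in> borel_measurable M"
      using borel_measurable_Rplus_continuous_on[OF cont] by (simp add: measurable_cong_sets[OF that(2) refl])
    with that show ?thesis
      using nn_integral_layer_cake[of M h] h_nonneg sets_eq_RplusD(1)[OF that(2)]
      by (simp add: prob_space_imp_sigma_finite)
  qed
  show ?thesis
    unfolding layer_cake[OF M1] layer_cake[OF M2]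
    by (intro nn_integral_mono mult_left_mono emeasure_superlevel_set_mono[OF cont mono M1 M2 dom]) auto
qed

lemma integral_mono_stochastic_dominance:
  fixes g :: "real \<Rightarrow> real"
  assumes cont: "continuous_on {0..} g" and mono: "\<And>x y. 0 \<le> x \<Longrightarrow> x \<le> y \<Longrightarrow> g x \<le> g y"
    and M1: "prob_space M1" "sets M1 = sets Rplus" and M2: "prob_space M2" "sets M2 = sets Rplus"
    and dom: "\<And>a. 0 \<le> a \<Longrightarrow> measure M2 {0..a} \<le> measure M1 {0..a}"
    and int1: "integrable M1 g" and int2: "integrable M2 g"
  shows "(\<integral>x. g x \<partial>M1) \<le> (\<integral>x. g x \<partial>M2)"
proof -
  interpret M1: prob_space M1 by (rule M1)
  interpret M2: prob_space M2 by (rule M2)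
  define h where "h x = g x - g 0" for x
  have h_nonneg: "0 \<le> h x" if "0 \<le> x" for x
    using mono[OF order_refl that] by (simp add: h_def)
  have "(\<integral>\<^sup>+x. h x \<partial>M1) \<le> (\<integral>\<^sup>+x. h x \<partial>M2)"
    using cont mono by (intro nn_integral_mono_stochastic_dominance[OF _ _ h_nonneg M1 M2 dom])
      (auto simp: h_def intro!: continuous_intros)
  moreover have "(\<integral>\<^sup>+x. h x \<partial>M) = ennreal (\<integral>x. h x \<partial>M)"
    if "prob_space M" "sets M = sets Rplus" "integrable M g" for M
  proof (rule nn_integral_eq_integral)
    show "integrable M h"
      unfolding h_def
      using that(3) finite_measure.integrable_const[OF prob_space.finite_measure[OF that(1)]]
      by (rule Bochner_Integration.integrable_diff)
    show "AE x in M. 0 \<le> h x"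
      by (rule AE_I2) (simp add: h_nonneg sets_eq_RplusD(1)[OF that(2)])
  qed
  moreover have "0 \<le> (\<integral>x. h x \<partial>M2)"
    by (intro integral_nonneg_AE AE_I2) (simp add: h_nonneg sets_eq_RplusD(1)[OF M2(2)])
  ultimately have "(\<integral>x. h x \<partial>M1) \<le> (\<integral>x. h x \<partial>M2)"
    using M1 M2 int1 int2 by simp
  with int1 int2 show ?thesis by (simp add: h_def M1.prob_space M2.prob_space)
qed

section \<open>Discounted potentials of a Markov kernel on the half-line\<close>

definition discounted_potential ::
    "(real \<Rightarrow> real measure) \<Rightarrow> real \<Rightarrow> (real \<Rightarrow> ennreal) \<Rightarrow> real \<Rightarrow> ennreal" where
  "discounted_potential \<Gamma> \<delta> f x = (\<Sum>t. ennreal (\<delta> ^ t) * (\<integral>\<^sup>+z. f z \<partial>kpow \<Gamma> t x))"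

lemma kappa_enn_eq_discounted_potential:
  "kappa_enn \<Gamma> \<pi> b \<delta> \<phi> p = discounted_potential \<Gamma> \<delta> (\<lambda>z. ennreal (\<pi> z p + b)) \<phi>"
  by (simp add: kappa_enn_def discounted_potential_def)

lemma integrable_integral_le_of_nn_integral_le:
  fixes g :: "'a \<Rightarrow> real"
  assumes g_meas: "g \<in> borel_measurable M" and g_nonneg: "\<And>x. x \<in> space M \<Longrightarrow> 0 \<le> g x"
    and le: "ennreal c * (\<integral>\<^sup>+x. g x \<partial>M) \<le> ennreal d" and "0 < c" and "0 \<le> d"
  shows "integrable M g" and "c * (\<integral>x. g x \<partial>M) \<le> d"
proof -
  have AE_nonneg: "AE x in M. 0 \<le> g x" by (rule AE_I2) (rule g_nonneg)
  have "ennreal c * (\<integral>\<^sup>+x. g x \<partial>M) < \<infinity>"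
    using le by (simp add: le_less_trans)
  with \<open>0 < c\<close> have finite: "(\<integral>\<^sup>+x. g x \<partial>M) < \<infinity>"
    by (auto simp: ennreal_mult_less_top)
  then show "integrable M g" by (rule integrableI_nonneg[OF g_meas AE_nonneg])
  have "c * (\<integral>x. g x \<partial>M) = enn2real (ennreal c * (\<integral>\<^sup>+x. g x \<partial>M))"
    using \<open>0 < c\<close> by (simp add: integral_eq_nn_integral[OF g_meas AE_nonneg] enn2real_mult)
  also have "\<dots> \<le> d"
    using le \<open>0 \<le> d\<close> by (simp add: enn2real_leI)
  finally show "c * (\<integral>x. g x \<partial>M) \<le> d" .
qed

context
  fixes \<Gamma> :: "real \<Rightarrow> real measure"
  assumes kernel: "\<Gamma> \<in> Rplus \<rightarrow>\<^sub>M prob_algebra Rplus"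
begin

lemma
  assumes "0 \<le> x"
  shows sets_kernel: "sets (\<Gamma> x) = sets Rplus"
    and prob_space_kernel: "prob_space (\<Gamma> x)"
    and space_kernel: "space (\<Gamma> x) = {0..}"
proof -
  have "\<Gamma> x \<in> space (prob_algebra Rplus)"
    using measurable_space[OF kernel] assms by simp
  then show "sets (\<Gamma> x) = sets Rplus" "prob_space (\<Gamma> x)"
    by (auto simp: space_prob_algebra)
  then show "space (\<Gamma> x) = {0..}" by (simp add: sets_eq_RplusD)
qed

lemma measurable_cong_kernel:
  "0 \<le> x \<Longrightarrow> f \<in> borel_measurable (\<Gamma> x) \<longleftrightarrow> f \<in> borel_measurable Rplus"
  using measurable_cong_sets[OF sets_kernel refl] by blast

lemma measurable_kpow: "kpow \<Gamma> n \<in> Rplus \<rightarrow>\<^sub>M prob_algebra Rplus"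
proof (induction n)
  case 0
  show ?case by (simp add: measurable_return_prob_space)
next
  case (Suc n)
  have "(\<lambda>x. kpow \<Gamma> n x \<bind> \<Gamma>) \<in> Rplus \<rightarrow>\<^sub>M prob_algebra Rplus"
    by (rule measurable_bind_prob_space[OF Suc kernel])
  then show ?case by (simp add: fun_eq_iff[of "kpow \<Gamma> (Suc n)"])
qed

lemma kpow_Suc_left:
  assumes "0 \<le> x"
  shows "kpow \<Gamma> (Suc n) x = \<Gamma> x \<bind> kpow \<Gamma> n"
proof (induction n)
  case 0
  have "\<Gamma> x \<bind> return Rplus = \<Gamma> x"
    by (rule bind_return''[OF sets_kernel[OF assms]])
  with bind_return[OF measurable_prob_algebraD[OF kernel]] assms show ?case by simp
next
  case (Suc n)
  have kpow_sub: "kpow \<Gamma> n \<in> \<Gamma> x \<rightarrow>\<^sub>M subprob_algebra Rplus"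
    using measurable_prob_algebraD[OF measurable_kpow] measurable_cong_sets[OF sets_kernel[OF assms] refl]
    by blast
  have "kpow \<Gamma> (Suc (Suc n)) x = \<Gamma> x \<bind> kpow \<Gamma> n \<bind> \<Gamma>"
    using Suc by simp
  also have "\<dots> = \<Gamma> x \<bind> (\<lambda>y. kpow \<Gamma> n y \<bind> \<Gamma>)"
    by (rule bind_assoc[OF kpow_sub measurable_prob_algebraD[OF kernel]])
  finally show ?case by simp
qed

lemma borel_measurable_nn_integral_kpow:
  "f \<in> borel_measurable Rplus \<Longrightarrow> (\<lambda>x. \<integral>\<^sup>+y. f y \<partial>kpow \<Gamma> n x) \<in> borel_measurable Rplus"
  using measurable_compose[OF measurable_prob_algebraD[OF measurable_kpow]
      nn_integral_measurable_subprob_algebra] .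

lemma nn_integral_kpow_Suc:
  assumes f: "f \<in> borel_measurable Rplus" and "0 \<le> x"
  shows "(\<integral>\<^sup>+z. f z \<partial>kpow \<Gamma> (Suc n) x) = (\<integral>\<^sup>+y. (\<integral>\<^sup>+z. f z \<partial>kpow \<Gamma> n y) \<partial>\<Gamma> x)"
proof -
  have "kpow \<Gamma> n \<in> \<Gamma> x \<rightarrow>\<^sub>M subprob_algebra Rplus"
    using measurable_prob_algebraD[OF measurable_kpow] measurable_cong_sets[OF sets_kernel[OF \<open>0 \<le> x\<close>] refl]
    by blast
  then show ?thesis
    unfolding kpow_Suc_left[OF \<open>0 \<le> x\<close>] by (rule nn_integral_bind[OF f])
qed

lemma borel_measurable_discounted_potential:
  assumes "f \<in> borel_measurable Rplus"
  shows "discounted_potential \<Gamma> \<delta> f \<in> borel_measurable Rplus"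
proof -
  note [measurable] = borel_measurable_nn_integral_kpow[OF assms]
  show ?thesis unfolding discounted_potential_def[abs_def] by measurable
qed

lemma discounted_potential_unfold:
  assumes f: "f \<in> borel_measurable Rplus" and "0 \<le> \<delta>" and x: "0 \<le> x"
  shows "discounted_potential \<Gamma> \<delta> f x = f x + \<delta> * (\<integral>\<^sup>+y. discounted_potential \<Gamma> \<delta> f y \<partial>\<Gamma> x)"
proof -
  define g where "g t = ennreal (\<delta> ^ t) * (\<integral>\<^sup>+z. f z \<partial>kpow \<Gamma> t x)" for t
  note [measurable] = borel_measurable_nn_integral_kpow[OF f]
  have "(\<integral>\<^sup>+y. discounted_potential \<Gamma> \<delta> f y \<partial>\<Gamma> x)
      = (\<Sum>t. \<integral>\<^sup>+y. ennreal (\<delta> ^ t) * (\<integral>\<^sup>+z. f z \<partial>kpow \<Gamma> t y) \<partial>\<Gamma> x)"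
    unfolding discounted_potential_def
    by (rule nn_integral_suminf) (simp add: measurable_cong_kernel[OF x])
  also have "\<dots> = (\<Sum>t. ennreal (\<delta> ^ t) * (\<integral>\<^sup>+z. f z \<partial>kpow \<Gamma> (Suc t) x))"
    by (simp add: nn_integral_cmult measurable_cong_kernel[OF x] nn_integral_kpow_Suc[OF f x]
        del: kpow.simps)
  finally have "\<delta> * (\<integral>\<^sup>+y. discounted_potential \<Gamma> \<delta> f y \<partial>\<Gamma> x) = (\<Sum>t. g (Suc t))"
    using \<open>0 \<le> \<delta>\<close> by (simp add: g_def ennreal_mult mult.assoc del: kpow.simps)
  moreover have "g 0 = f x"
    using x f by (simp add: g_def nn_integral_return)
  moreover have "g sums ((\<Sum>t. g (Suc t)) + g 0)"
    by (intro sums_Suc summable_sums summableI)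
  ultimately show ?thesis
    by (simp add: discounted_potential_def g_def[symmetric] sums_iff add.commute)
qed

lemma discounted_potential_ge:
  assumes "f \<in> borel_measurable Rplus" and "0 \<le> \<delta>" and "0 \<le> x"
  shows "f x \<le> discounted_potential \<Gamma> \<delta> f x"
  unfolding discounted_potential_unfold[OF assms] by (rule add_increasing2) simp_all

lemma
  assumes f: "f \<in> borel_measurable Rplus" and "0 < \<delta>" and x: "0 \<le> x"
    and finite: "\<And>y. 0 \<le> y \<Longrightarrow> discounted_potential \<Gamma> \<delta> f y < \<infinity>"
  shows integrable_kernel_discounted_potential:
      "integrable (\<Gamma> x) (\<lambda>y. enn2real (discounted_potential \<Gamma> \<delta> f y))"
    and integral_kernel_discounted_potential_le:
      "(\<integral>y. enn2real (discounted_potential \<Gamma> \<delta> f y) \<partial>\<Gamma> x)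
         \<le> enn2real (discounted_potential \<Gamma> \<delta> f x) / \<delta>"
proof -
  let ?P = "discounted_potential \<Gamma> \<delta> f" and ?k = "\<lambda>y. enn2real (discounted_potential \<Gamma> \<delta> f y)"
  have k_eq: "ennreal (?k y) = ?P y" if "0 \<le> y" for y
    using finite[OF that] by simp
  have step: "\<delta> * (\<integral>\<^sup>+y. ?P y \<partial>\<Gamma> x) \<le> ennreal (?k x)"
  proof -
    have "\<delta> * (\<integral>\<^sup>+y. ?P y \<partial>\<Gamma> x) \<le> f x + \<delta> * (\<integral>\<^sup>+y. ?P y \<partial>\<Gamma> x)"
      by (rule add_increasing) simp_all
    also have "\<dots> = ennreal (?k x)"
      unfolding k_eq[OF x]
      by (rule discounted_potential_unfold[OF f less_imp_le[OF \<open>0 < \<delta>\<close>] x, symmetric])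
    finally show ?thesis .
  qed
  have "(\<integral>\<^sup>+y. ?k y \<partial>\<Gamma> x) = (\<integral>\<^sup>+y. ?P y \<partial>\<Gamma> x)"
    by (rule nn_integral_cong) (simp add: k_eq space_kernel[OF x])
  with step have nn_le: "\<delta> * (\<integral>\<^sup>+y. ?k y \<partial>\<Gamma> x) \<le> ennreal (?k x)"
    by (simp only:)
  have k_meas: "?k \<in> borel_measurable (\<Gamma> x)"
    using borel_measurable_enn2real[OF borel_measurable_discounted_potential[OF f]]
    by (simp only: measurable_cong_kernel[OF x])
  note bound = integrable_integral_le_of_nn_integral_le[OF k_meas enn2real_nonneg nn_le \<open>0 < \<delta>\<close> enn2real_nonneg]
  show "integrable (\<Gamma> x) ?k" by (rule bound(1))
  show "(\<integral>y. ?k y \<partial>\<Gamma> x) \<le> ?k x / \<delta>"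
    using bound(2) \<open>0 < \<delta>\<close> by (simp add: pos_le_divide_eq mult.commute)
qed

lemma
  assumes \<pi>_meas: "(\<lambda>z. \<pi> z p) \<in> borel_measurable Rplus" and "0 < \<delta>" and "0 \<le> \<phi>"
    and finite: "\<And>\<phi>. 0 \<le> \<phi> \<Longrightarrow> kappa_enn \<Gamma> \<pi> b \<delta> \<phi> p < \<infinity>"
  shows integrable_kernel_kappa: "integrable (\<Gamma> \<phi>) (\<lambda>\<phi>'. kappa \<Gamma> \<pi> b \<delta> \<phi>' p)"
    and Gamma_op_kappa_le: "Gamma_op \<Gamma> (kappa \<Gamma> \<pi> b \<delta>) \<phi> p \<le> kappa \<Gamma> \<pi> b \<delta> \<phi> p / \<delta>"
proof -
  have f: "(\<lambda>z. ennreal (\<pi> z p + b)) \<in> borel_measurable Rplus" using \<pi>_meas by measurable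
  note finite' = finite[unfolded kappa_enn_eq_discounted_potential]
  show "integrable (\<Gamma> \<phi>) (\<lambda>\<phi>'. kappa \<Gamma> \<pi> b \<delta> \<phi>' p)"
    using integrable_kernel_discounted_potential[OF f \<open>0 < \<delta>\<close> \<open>0 \<le> \<phi>\<close> finite']
    by (simp add: kappa_def kappa_enn_eq_discounted_potential)
  show "Gamma_op \<Gamma> (kappa \<Gamma> \<pi> b \<delta>) \<phi> p \<le> kappa \<Gamma> \<pi> b \<delta> \<phi> p / \<delta>"
    using integral_kernel_discounted_potential_le[OF f \<open>0 < \<delta>\<close> \<open>0 \<le> \<phi>\<close> finite']
    by (simp add: Gamma_op_def kappa_def kappa_enn_eq_discounted_potential)
qed

lemma kappa_ge:
  assumes "(\<lambda>z. \<pi> z p) \<in> borel_measurable Rplus" and "0 \<le> \<delta>" and "0 \<le> \<phi>"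
    and "kappa_enn \<Gamma> \<pi> b \<delta> \<phi> p < \<infinity>" and "0 \<le> \<pi> \<phi> p + b"
  shows "\<pi> \<phi> p + b \<le> kappa \<Gamma> \<pi> b \<delta> \<phi> p"
proof -
  have "ennreal (\<pi> \<phi> p + b) \<le> kappa_enn \<Gamma> \<pi> b \<delta> \<phi> p"
    unfolding kappa_enn_eq_discounted_potential
    by (rule discounted_potential_ge[where f = "\<lambda>z. ennreal (\<pi> z p + b)"]) (use assms in measurable)
  then show ?thesis
    using enn2real_mono[of "ennreal (\<pi> \<phi> p + b)" "kappa_enn \<Gamma> \<pi> b \<delta> \<phi> p"] assms(4,5)
    by (simp add: kappa_def)
qed

section \<open>The kernel operator on the weighted space\<close>

lemma integrable_kernel_Cspace:
  assumes \<kappa>_pos: "\<And>\<phi> p. 0 \<le> \<phi> \<Longrightarrow> 0 \<le> p \<Longrightarrow> 0 < \<kappa> \<phi> p"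
    and \<kappa>_int: "\<And>\<phi> p. 0 \<le> \<phi> \<Longrightarrow> 0 \<le> p \<Longrightarrow> integrable (\<Gamma> \<phi>) (\<lambda>\<phi>'. \<kappa> \<phi>' p)"
    and u: "u \<in> Cspace \<kappa>" and "0 \<le> \<phi>" and "0 \<le> p"
  shows "integrable (\<Gamma> \<phi>) (\<lambda>\<phi>'. u \<phi>' p)"
proof -
  obtain M where M: "\<And>\<phi> p. 0 \<le> \<phi> \<Longrightarrow> 0 \<le> p \<Longrightarrow> \<bar>u \<phi> p\<bar> \<le> M * \<kappa> \<phi> p"
    using Cspace_abs_le[OF u \<kappa>_pos] by blast
  have "continuous_on {0..} (\<lambda>\<phi>'. u \<phi>' p)"
    using u \<open>0 \<le> p\<close> by (intro continuous_on_slice) (simp_all add: Cspace_def)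
  then have "(\<lambda>\<phi>'. u \<phi>' p) \<in> borel_measurable (\<Gamma> \<phi>)"
    by (simp add: measurable_cong_kernel[OF \<open>0 \<le> \<phi>\<close>] borel_measurable_Rplus_continuous_on)
  moreover have "AE y in \<Gamma> \<phi>. norm (u y p) \<le> norm (M * \<kappa> y p)"
  proof (rule AE_I2)
    fix y assume "y \<in> space (\<Gamma> \<phi>)"
    then have "0 \<le> y" by (simp add: space_kernel[OF \<open>0 \<le> \<phi>\<close>])
    show "norm (u y p) \<le> norm (M * \<kappa> y p)"
      using order.trans[OF M[OF \<open>0 \<le> y\<close> \<open>0 \<le> p\<close>] abs_ge_self] by simp
  qed
  ultimately show ?thesis
    using Bochner_Integration.integrable_bound[OF integrable_mult_right[OF \<kappa>_int[OF \<open>0 \<le> \<phi>\<close> \<open>0 \<le> p\<close>]]]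
    by blast
qed

lemma Gamma_op_incr2:
  assumes mono_kernel: "\<And>a \<phi>1 \<phi>2. 0 \<le> a \<Longrightarrow> 0 \<le> \<phi>1 \<Longrightarrow> \<phi>1 \<le> \<phi>2 \<Longrightarrow>
      measure (\<Gamma> \<phi>2) {0..a} \<le> measure (\<Gamma> \<phi>1) {0..a}"
    and cont: "continuous_on ({0..} \<times> {0..}) (\<lambda>(\<phi>, p). u \<phi> p)" and incr: "incr2 u"
    and int: "\<And>\<phi> p. 0 \<le> \<phi> \<Longrightarrow> 0 \<le> p \<Longrightarrow> integrable (\<Gamma> \<phi>) (\<lambda>\<phi>'. u \<phi>' p)"
  shows "incr2 (Gamma_op \<Gamma> u)"
  unfolding incr2_def
proof (intro allI impI)
  fix \<phi>1 \<phi>2 p1 p2 :: real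
  assume "0 \<le> \<phi>1" "0 \<le> p1" "\<phi>1 \<le> \<phi>2" "p1 \<le> p2"
  then have "0 \<le> \<phi>2" "0 \<le> p2" by linarith+
  have "(\<integral>y. u y p1 \<partial>\<Gamma> \<phi>1) \<le> (\<integral>y. u y p2 \<partial>\<Gamma> \<phi>1)"
    using incr \<open>0 \<le> p1\<close> \<open>p1 \<le> p2\<close>
    by (intro integral_mono int \<open>0 \<le> \<phi>1\<close> \<open>0 \<le> p2\<close>) (auto simp: space_kernel[OF \<open>0 \<le> \<phi>1\<close>] incr2_def)
  also have "\<dots> \<le> (\<integral>y. u y p2 \<partial>\<Gamma> \<phi>2)"
  proof (rule integral_mono_stochastic_dominance)
    show "continuous_on {0..} (\<lambda>y. u y p2)" by (rule continuous_on_slice[OF cont \<open>0 \<le> p2\<close>])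
    show "u x p2 \<le> u y p2" if "0 \<le> x" "x \<le> y" for x y
      using incr that \<open>0 \<le> p2\<close> by (simp add: incr2_def)
    show "measure (\<Gamma> \<phi>2) {0..a} \<le> measure (\<Gamma> \<phi>1) {0..a}" if "0 \<le> a" for a
      using mono_kernel that \<open>0 \<le> \<phi>1\<close> \<open>\<phi>1 \<le> \<phi>2\<close> .
  qed (use int \<open>0 \<le> \<phi>1\<close> \<open>0 \<le> \<phi>2\<close> \<open>0 \<le> p2\<close> in \<open>simp_all add: prob_space_kernel sets_kernel\<close>)
  finally show "Gamma_op \<Gamma> u \<phi>1 p1 \<le> Gamma_op \<Gamma> u \<phi>2 p2" by (simp add: Gamma_op_def)
qed

lemma Gamma_op_in_Cspace:
  assumes mono_kernel: "\<And>a \<phi>1 \<phi>2. 0 \<le> a \<Longrightarrow> 0 \<le> \<phi>1 \<Longrightarrow> \<phi>1 \<le> \<phi>2 \<Longrightarrow>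
      measure (\<Gamma> \<phi>2) {0..a} \<le> measure (\<Gamma> \<phi>1) {0..a}"
    and \<kappa>_pos: "\<And>\<phi> p. 0 \<le> \<phi> \<Longrightarrow> 0 \<le> p \<Longrightarrow> 0 < \<kappa> \<phi> p"
    and \<kappa>_int: "\<And>\<phi> p. 0 \<le> \<phi> \<Longrightarrow> 0 \<le> p \<Longrightarrow> integrable (\<Gamma> \<phi>) (\<lambda>\<phi>'. \<kappa> \<phi>' p)"
    and \<kappa>_le: "\<And>\<phi> p. 0 \<le> \<phi> \<Longrightarrow> 0 \<le> p \<Longrightarrow> Gamma_op \<Gamma> \<kappa> \<phi> p \<le> C * \<kappa> \<phi> p"
    and u: "u \<in> Cspace \<kappa>"
    and cont: "continuous_on ({0..} \<times> {0..}) (\<lambda>(\<phi>, p). Gamma_op \<Gamma> u \<phi> p)"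
  shows "Gamma_op \<Gamma> u \<in> Cspace \<kappa>"
proof -
  obtain M where "0 \<le> M" and u_le: "\<And>\<phi> p. 0 \<le> \<phi> \<Longrightarrow> 0 \<le> p \<Longrightarrow> \<bar>u \<phi> p\<bar> \<le> M * \<kappa> \<phi> p"
    using Cspace_abs_le[OF u \<kappa>_pos] by blast
  have u_cont: "continuous_on ({0..} \<times> {0..}) (\<lambda>(\<phi>, p). u \<phi> p)" and u_incr: "incr2 u"
    using u by (simp_all add: Cspace_def)
  have u_int: "integrable (\<Gamma> \<phi>) (\<lambda>\<phi>'. u \<phi>' p)" if "0 \<le> \<phi>" "0 \<le> p" for \<phi> p
    using \<kappa>_pos \<kappa>_int u that by (rule integrable_kernel_Cspace)
  have bound: "\<bar>Gamma_op \<Gamma> u \<phi> p / \<kappa> \<phi> p\<bar> \<le> M * C" if "0 \<le> \<phi>" "0 \<le> p" for \<phi> p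
  proof -
    have "\<bar>Gamma_op \<Gamma> u \<phi> p\<bar> \<le> (\<integral>y. \<bar>u y p\<bar> \<partial>\<Gamma> \<phi>)"
      unfolding Gamma_op_def by (rule integral_abs_bound)
    also have "\<dots> \<le> (\<integral>y. M * \<kappa> y p \<partial>\<Gamma> \<phi>)"
    proof (rule integral_mono)
      show "integrable (\<Gamma> \<phi>) (\<lambda>y. \<bar>u y p\<bar>)" using u_int[OF that] by (rule integrable_abs)
      show "integrable (\<Gamma> \<phi>) (\<lambda>y. M * \<kappa> y p)" using \<kappa>_int[OF that] by (rule integrable_mult_right)
      show "\<bar>u y p\<bar> \<le> M * \<kappa> y p" if "y \<in> space (\<Gamma> \<phi>)" for y
        using u_le \<open>0 \<le> p\<close> that by (simp add: space_kernel[OF \<open>0 \<le> \<phi>\<close>])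
    qed
    also have "\<dots> = M * Gamma_op \<Gamma> \<kappa> \<phi> p" by (simp add: Gamma_op_def)
    also have "\<dots> \<le> M * (C * \<kappa> \<phi> p)" using \<kappa>_le[OF that] \<open>0 \<le> M\<close> by (rule mult_left_mono)
    finally have "\<bar>Gamma_op \<Gamma> u \<phi> p\<bar> \<le> M * C * \<kappa> \<phi> p" by (simp add: mult.assoc)
    then have "\<bar>Gamma_op \<Gamma> u \<phi> p\<bar> / \<kappa> \<phi> p \<le> M * C"
      using \<kappa>_pos[OF that] by (simp add: pos_divide_le_eq)
    then show ?thesis using \<kappa>_pos[OF that] by (simp add: abs_divide)
  qed
  have "bdd_above ((\<lambda>(\<phi>, p). \<bar>Gamma_op \<Gamma> u \<phi> p / \<kappa> \<phi> p\<bar>) ` ({0..} \<times> {0..}))"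
    by (rule bdd_aboveI2[where M = "M * C"]) (auto simp del: abs_divide intro!: bound)
  moreover have "incr2 (Gamma_op \<Gamma> u)"
    by (rule Gamma_op_incr2[OF mono_kernel u_cont u_incr u_int])
  ultimately show ?thesis
    using cont by (simp add: Cspace_def)
qed

end

theorem lemma4:
  fixes D :: "real \<Rightarrow> ereal"
    and \<pi> q :: "real \<Rightarrow> real \<Rightarrow> real"
    and \<Gamma> :: "real \<Rightarrow> real measure"
    and \<gamma> :: "real measure"
    and r c\<^sub>e \<delta> b :: real
  assumes
    \<comment> \<open>(A1)\<close>
    A1_cont: "continuous_on {0..} D"
    and A1_decr: "\<forall>x y. 0 \<le> x \<longrightarrow> x < y \<longrightarrow> D y < D x"
    and A1_zero: "D 0 = \<infinity>"
    and A1_lim: "(D \<longlongrightarrow> 0) at_top"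
    \<comment> \<open>(A2)\<close>
    and A2_cont_pi: "continuous_on ({0..} \<times> {0..}) (\<lambda>(\<phi>, p). \<pi> \<phi> p)"
    and A2_cont_q: "continuous_on ({0..} \<times> {0..}) (\<lambda>(\<phi>, p). q \<phi> p)"
    and A2_incr_pi: "strict_incr2 \<pi>"
    and A2_incr_q: "strict_incr2 q"
    and A2_q_nonneg: "\<forall>\<phi> p. 0 \<le> \<phi> \<longrightarrow> 0 \<le> p \<longrightarrow> 0 \<le> q \<phi> p"
    and A2_neg: "\<forall>\<phi> p. 0 \<le> \<phi> \<longrightarrow> 0 \<le> p \<longrightarrow> (\<phi> = 0 \<or> p = 0) \<longrightarrow> \<pi> \<phi> p < 0"
    \<comment> \<open>(A3): Markov kernel on R_+, monotone, with conditions (a), (b)\<close>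
    and A3_kernel: "\<Gamma> \<in> Rplus \<rightarrow>\<^sub>M prob_algebra Rplus"
    and A3_mono: "\<forall>a \<phi>1 \<phi>2. 0 \<le> a \<longrightarrow> 0 \<le> \<phi>1 \<longrightarrow> \<phi>1 \<le> \<phi>2 \<longrightarrow>
                    measure (\<Gamma> \<phi>2) {0..a} \<le> measure (\<Gamma> \<phi>1) {0..a}"
    and A3a: "\<forall>a \<phi>. 0 < a \<longrightarrow> 0 \<le> \<phi> \<longrightarrow> (\<exists>n. 0 < measure (kpow \<Gamma> n \<phi>) {0..<a})"
    and A3b: "\<forall>p. 0 < p \<longrightarrow> (\<exists>\<phi>\<ge>0. 0 \<le> (\<integral>\<phi>'. \<pi> \<phi>' p \<partial>(\<Gamma> \<phi>)))"
    and r_pos: "0 < r"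
    \<comment> \<open>(A4)\<close>
    and A4_prob: "prob_space \<gamma>"
    and A4_sets: "sets \<gamma> = sets Rplus"
    and A4_q: "\<forall>p. 0 \<le> p \<longrightarrow> integrable \<gamma> (\<lambda>\<phi>. q \<phi> p)"
    and A4_supp: "\<forall>a. 0 < a \<longrightarrow> 0 < measure \<gamma> {0..a}"
    and ce_pos: "0 < c\<^sub>e"
    \<comment> \<open>(A5)\<close>
    and A5: "\<exists>p>0. c\<^sub>e \<le> (\<integral>\<phi>. \<pi> \<phi> p \<partial>\<gamma>)"
    \<comment> \<open>(A6), with beta = 1/(1+r)\<close>
    and A6: "\<forall>p. 0 \<le> p \<longrightarrow> (\<Sum>t. (1 / (1 + r)) ^ t * (\<integral>\<phi>'. \<pi> \<phi>' p \<partial>(kpow \<Gamma> t 0))) \<le> 0"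
    \<comment> \<open>(A7): delta in (beta,1), E pi(phi_t,p) finite and the discounted series finite\<close>
    and A7_delta: "1 / (1 + r) < \<delta>" "\<delta> < 1"
    and A7_int: "\<forall>t p. 0 \<le> p \<longrightarrow> integrable (bind \<gamma> (kpow \<Gamma> t)) (\<lambda>\<phi>. \<pi> \<phi> p)"
    and A7_sum: "\<forall>p. 0 \<le> p \<longrightarrow> summable (\<lambda>t. \<delta> ^ t * (\<integral>\<phi>. \<pi> \<phi> p \<partial>(bind \<gamma> (kpow \<Gamma> t))))"
    \<comment> \<open>the constant b and finiteness of kappa\<close>
    and b_bound: "\<forall>\<phi> p. 0 \<le> \<phi> \<longrightarrow> 0 \<le> p \<longrightarrow> 1 \<le> \<pi> \<phi> p + b"
    and kappa_fin: "\<forall>\<phi> p. 0 \<le> \<phi> \<longrightarrow> 0 \<le> p \<longrightarrow> kappa_enn \<Gamma> \<pi> b \<delta> \<phi> p < \<infinity>"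
    \<comment> \<open>(A8)\<close>
    and A8: "\<forall>u \<in> Cspace (kappa \<Gamma> \<pi> b \<delta>).
               continuous_on ({0..} \<times> {0..}) (\<lambda>(\<phi>, p). \<integral>\<phi>'. u \<phi>' p \<partial>(\<Gamma> \<phi>))"
  shows
    "(\<forall>u \<in> Cspace (kappa \<Gamma> \<pi> b \<delta>).
        (\<forall>\<phi> p. 0 \<le> \<phi> \<longrightarrow> 0 \<le> p \<longrightarrow> integrable (\<Gamma> \<phi>) (\<lambda>\<phi>'. u \<phi>' p)) \<and>
        Gamma_op \<Gamma> u \<in> Cspace (kappa \<Gamma> \<pi> b \<delta>))
     \<and> (\<forall>\<phi> p. 0 \<le> \<phi> \<longrightarrow> 0 \<le> p \<longrightarrow>
        integrable (\<Gamma> \<phi>) (\<lambda>\<phi>'. kappa \<Gamma> \<pi> b \<delta> \<phi>' p) \<and>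
        Gamma_op \<Gamma> (kappa \<Gamma> \<pi> b \<delta>) \<phi> p \<le> kappa \<Gamma> \<pi> b \<delta> \<phi> p / \<delta>)"
proof -
  have "0 < 1 / (1 + r)" using r_pos by simp
  with A7_delta(1) have "0 < \<delta>" by linarith
  have \<pi>_meas: "(\<lambda>z. \<pi> z p) \<in> borel_measurable Rplus" if "0 \<le> p" for p
    using continuous_on_slice[OF A2_cont_pi that] by (rule borel_measurable_Rplus_continuous_on)
  have kappa_int: "integrable (\<Gamma> \<phi>) (\<lambda>\<phi>'. kappa \<Gamma> \<pi> b \<delta> \<phi>' p)"
    and kappa_le: "Gamma_op \<Gamma> (kappa \<Gamma> \<pi> b \<delta>) \<phi> p \<le> kappa \<Gamma> \<pi> b \<delta> \<phi> p / \<delta>"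
    if "0 \<le> \<phi>" "0 \<le> p" for \<phi> p
    using \<pi>_meas[OF that(2)] \<open>0 < \<delta>\<close> that(1) kappa_fin that(2)
    by (blast intro: integrable_kernel_kappa[OF A3_kernel], blast intro: Gamma_op_kappa_le[OF A3_kernel])
  have kappa_pos: "0 < kappa \<Gamma> \<pi> b \<delta> \<phi> p" if "0 \<le> \<phi>" "0 \<le> p" for \<phi> p
  proof -
    have "1 \<le> \<pi> \<phi> p + b" using b_bound that by blast
    moreover have "\<pi> \<phi> p + b \<le> kappa \<Gamma> \<pi> b \<delta> \<phi> p"
      using \<pi>_meas[OF that(2)] less_imp_le[OF \<open>0 < \<delta>\<close>] that(1) kappa_fin that(2) \<open>1 \<le> \<pi> \<phi> p + b\<close>
      by (intro kappa_ge[OF A3_kernel]) auto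
    ultimately show ?thesis by linarith
  qed
  have "Gamma_op \<Gamma> u \<in> Cspace (kappa \<Gamma> \<pi> b \<delta>)" if "u \<in> Cspace (kappa \<Gamma> \<pi> b \<delta>)" for u
  proof (rule Gamma_op_in_Cspace[OF A3_kernel _ kappa_pos kappa_int _ that])
    show "Gamma_op \<Gamma> (kappa \<Gamma> \<pi> b \<delta>) \<phi> p \<le> 1 / \<delta> * kappa \<Gamma> \<pi> b \<delta> \<phi> p"
      if "0 \<le> \<phi>" "0 \<le> p" for \<phi> p
      using kappa_le[OF that] by simp
    show "continuous_on ({0..} \<times> {0..}) (\<lambda>(\<phi>, p). Gamma_op \<Gamma> u \<phi> p)"
      using A8 that by (simp add: Gamma_op_def)
  qed (use A3_mono in auto)
  moreover have "integrable (\<Gamma> \<phi>) (\<lambda>\<phi>'. u \<phi>' p)"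
    if "u \<in> Cspace (kappa \<Gamma> \<pi> b \<delta>)" "0 \<le> \<phi>" "0 \<le> p" for u \<phi> p
    using kappa_pos kappa_int that by (rule integrable_kernel_Cspace[OF A3_kernel])
  ultimately show ?thesis
    using kappa_int kappa_le by blast
qed

end
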